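(* Let $\tilde{A}\in\mathbb{Q}^{q\times n}$, $\tilde{b}\in\mathbb{Q}^{q}$ be the constraint data of the LP relaxation $P=\{x\in\mathbb{R}^n: \tilde{A}x\ge \tilde{b}\}=\{x: Ax\ge b,\ x\ge 0,\ x_j\le 1,\ j=1,\dots,p\}$ (with $A$ an $m\times n$ matrix, $q=m+n+p$, $Q=\{1,\dots,q\}$), and let $T$ be a finite index set with matrices $D^t\in\mathbb{Q}^{r\times n}$ and vectors $d_0^t\in\mathbb{Q}^r$ for $t\in T$. Let $\bar{w}=(\bar{\alpha},\bar{\beta},\{\bar{u}^t,\bar{v}^t\}_{t\in T})$ be a basic feasible solution of the CGLP system (described in the context). Let $N=N(\bar{u}):=\{j\in Q: \bar{u}^t_j>0 \text{ for some } t\in T\}$ and let $\tilde{A}_N$ be the $|N|\times n$ submatrix of $\tilde{A}$ formed by the rows indexed by $N$. Then $\bar{w}$ is regular if and only if $\tilde{A}_N$ has full row rank, i.e. $\operatorname{rank}(\tilde{A}_N)=|N|$.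
   Context: The CGLP system consists of the variables $\alpha\in\mathbb{R}^n$, $\beta\in\mathbb{R}$, $u^t\in\mathbb{R}^q$, $v^t\in\mathbb{R}^r$ ($t\in T$, row vectors) and the constraints: $\alpha-u^t\tilde{A}-v^tD^t=0$ for all $t\in T$; $\beta-u^t\tilde{b}-v^td_0^t=0$ for all $t\in T$; $\sum_{t\in T}\sum_{i=1}^q u^t_i+\sum_{t\in T}\sum_{i=1}^r v^t_i=1$; $u^t\ge 0$, $v^t\ge 0$ for all $t\in T$. (These describe valid inequalities $\alpha x\ge\beta$ for the disjunctive set $\bigvee_{t\in T}\{x:\tilde{A}x\ge\tilde{b},\ D^tx\ge d_0^t\}$.) Note that the rows of $\tilde{A}$ include the $n$ rows of the identity matrix $I_n$ (from $x\ge 0$). A feasible basic solution $(\alpha,\beta,\{u^t,v^t\}_{t\in T})$ of this system is called regular if there exists a set $J\subseteq Q$ with $|J|=n$ such that the $n\times n$ submatrix $\tilde{A}_J$ (rows indexed by $J$) is nonsingular and $u^t_j=0$ for all $j\notin J$ and all $t\in T$; otherwise it is called irregular. *)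

theory Defs
  imports "Jordan_Normal_Form.DL_Rank" "Jordan_Normal_Form.DL_Submatrix" "Jordan_Normal_Form.Determinant"
begin

text \<open>Indices are 0-based. The LP relaxation P = {x : A x >= b, x >= 0, x_j <= 1 (j < p)}
  is written as {x : tA x >= tb} with q = m + n + p rows:
  rows 0..m-1 are A, rows m..m+n-1 are the identity I_n (x >= 0),
  rows m+n..m+n+p-1 are -e_j (j < p), i.e. -x_j >= -1.\<close>

definition tildeA :: "nat \<Rightarrow> nat \<Rightarrow> nat \<Rightarrow> real mat \<Rightarrow> real mat" where
  "tildeA m n p A = mat (m + n + p) n (\<lambda>(i, j).
      if i < m then A $$ (i, j)
      else if i < m + n then (if i - m = j then 1 else 0)
      else (if i - m - n = j then -1 else 0))"

definition tildeb :: "nat \<Rightarrow> nat \<Rightarrow> nat \<Rightarrow> real vec \<Rightarrow> real vec" where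
  "tildeb m n p b = vec (m + n + p) (\<lambda>i.
      if i < m then b $ i else if i < m + n then 0 else -1)"

text \<open>Feasibility in the CGLP system. Row vectors u^t, v^t are column vectors here;
  u^t tA is written transpose tA *v u^t.\<close>

definition cglp_feasible ::
  "real mat \<Rightarrow> real vec \<Rightarrow> 't set \<Rightarrow> nat \<Rightarrow> ('t \<Rightarrow> real mat) \<Rightarrow> ('t \<Rightarrow> real vec)
   \<Rightarrow> real vec \<Rightarrow> real \<Rightarrow> ('t \<Rightarrow> real vec) \<Rightarrow> ('t \<Rightarrow> real vec) \<Rightarrow> bool" where
  "cglp_feasible tA tb T r D d0 \<alpha> \<beta> u v \<longleftrightarrow>
     \<alpha> \<in> carrier_vec (dim_col tA) \<and>
     (\<forall>t\<in>T. u t \<in> carrier_vec (dim_row tA) \<and> v t \<in> carrier_vec r) \<and>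
     (\<forall>t\<in>T. \<alpha> = transpose_mat tA *\<^sub>v u t + transpose_mat (D t) *\<^sub>v v t) \<and>
     (\<forall>t\<in>T. \<beta> = u t \<bullet> tb + v t \<bullet> d0 t) \<and>
     (\<Sum>t\<in>T. \<Sum>i<dim_row tA. u t $ i) + (\<Sum>t\<in>T. \<Sum>i<r. v t $ i) = 1 \<and>
     (\<forall>t\<in>T. (\<forall>i<dim_row tA. u t $ i \<ge> 0) \<and> (\<forall>i<r. v t $ i \<ge> 0))"

text \<open>Basic solution: the constraints active at the point (all equality constraints together
  with the nonnegativity constraints u^t_i >= 0, v^t_i >= 0 that hold with equality) have
  rank equal to the number of variables, i.e. the homogeneous active system has only the
  trivial solution.\<close>

definition cglp_basic ::
  "real mat \<Rightarrow> real vec \<Rightarrow> 't set \<Rightarrow> nat \<Rightarrow> ('t \<Rightarrow> real mat) \<Rightarrow> ('t \<Rightarrow> real vec)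
   \<Rightarrow> real vec \<Rightarrow> real \<Rightarrow> ('t \<Rightarrow> real vec) \<Rightarrow> ('t \<Rightarrow> real vec) \<Rightarrow> bool" where
  "cglp_basic tA tb T r D d0 \<alpha> \<beta> u v \<longleftrightarrow>
     (\<forall>da db du dv.
        da \<in> carrier_vec (dim_col tA) \<and>
        (\<forall>t\<in>T. du t \<in> carrier_vec (dim_row tA) \<and> dv t \<in> carrier_vec r) \<and>
        (\<forall>t\<in>T. da = transpose_mat tA *\<^sub>v du t + transpose_mat (D t) *\<^sub>v dv t) \<and>
        (\<forall>t\<in>T. db = du t \<bullet> tb + dv t \<bullet> d0 t) \<and>
        (\<Sum>t\<in>T. \<Sum>i<dim_row tA. du t $ i) + (\<Sum>t\<in>T. \<Sum>i<r. dv t $ i) = 0 \<and>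
        (\<forall>t\<in>T. (\<forall>i<dim_row tA. u t $ i = 0 \<longrightarrow> du t $ i = 0) \<and>
                 (\<forall>i<r. v t $ i = 0 \<longrightarrow> dv t $ i = 0))
      \<longrightarrow> da = 0\<^sub>v (dim_col tA) \<and> db = 0 \<and>
          (\<forall>t\<in>T. du t = 0\<^sub>v (dim_row tA) \<and> dv t = 0\<^sub>v r))"

definition cglp_regular :: "real mat \<Rightarrow> 't set \<Rightarrow> ('t \<Rightarrow> real vec) \<Rightarrow> bool" where
  "cglp_regular tA T u \<longleftrightarrow>
     (\<exists>J. J \<subseteq> {..<dim_row tA} \<and> card J = dim_col tA \<and>
          det (submatrix tA J UNIV) \<noteq> 0 \<and>
          (\<forall>t\<in>T. \<forall>j<dim_row tA. j \<notin> J \<longrightarrow> u t $ j = 0))"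

definition Nset :: "nat \<Rightarrow> 't set \<Rightarrow> ('t \<Rightarrow> real vec) \<Rightarrow> nat set" where
  "Nset q T u = {j. j < q \<and> (\<exists>t\<in>T. u t $ j > 0)}"

end

theory Submission
  imports Defs "Jordan_Normal_Form.DL_Rank_Submatrix"
begin

(* A set J witnessing regularity contains N, and since u >= 0, u vanishes outside every J
  containing N; so regularity says that N extends to n rows J of tilde A with a nonsingular
  submatrix. As the rows of tilde A include the unit vectors, every linearly independent family
  of rows extends to n independent rows, so such a J exists iff the rows indexed by N are
  independent. Finally, tilde A_N has full row rank iff x |-> tilde A_N x is onto, i.e. iff the
  rows in N can be given arbitrary values at a common x: this forces them to be independent,
  and it is inherited from any nonsingular tilde A_J with J containing N. *)

lemma card_less_elem_less_card:
  fixes I :: "nat set"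
  assumes "finite I" and "i \<in> I"
  shows "card {a\<in>I. a < i} < card I"
  using assms by (intro psubset_card_mono) auto

lemma pick_lessThan_card_image:
  fixes I :: "nat set"
  assumes "finite I"
  shows "pick I ` {..<card I} = I"
proof
  show "pick I ` {..<card I} \<subseteq> I"
  proof (rule image_subsetI)
    fix k assume "k \<in> {..<card I}"
    then show "pick I k \<in> I" by (simp add: pick_in_set)
  qed
  show "I \<subseteq> pick I ` {..<card I}"
  proof
    fix i assume i: "i \<in> I"
    show "i \<in> pick I ` {..<card I}"
    proof (rule image_eqI)
      show "i = pick I (card {a\<in>I. a < i})" using pick_card_in_set[OF i] by simp
      show "card {a\<in>I. a < i} \<in> {..<card I}"
        using card_less_elem_less_card[OF assms i] by simp
    qed
  qed
qed

lemma submatrix_rows_carrier: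
  assumes "I \<subseteq> {..<dim_row A}"
  shows "submatrix A I UNIV \<in> carrier_mat (card I) (dim_col A)"
proof (rule carrier_matI)
  have "{i. i < dim_row A \<and> i \<in> I} = I" using assms by blast
  then show "dim_row (submatrix A I UNIV) = card I" unfolding dim_submatrix by simp
  have "{j. j < dim_col A \<and> j \<in> UNIV} = {..<dim_col A}" by blast
  then show "dim_col (submatrix A I UNIV) = dim_col A" unfolding dim_submatrix by simp
qed

lemma row_submatrix_rows:
  assumes "I \<subseteq> {..<dim_row A}" and "k < card I"
  shows "row (submatrix A I UNIV) k = row A (pick I k)"
proof -
  have "{i. i < dim_row A \<and> i \<in> I} = I" using assms by blast
  then show ?thesis using row_submatrix_UNIV[of k A I] assms(2) by simp
qed

lemma set_rows_submatrix:
  assumes "I \<subseteq> {..<dim_row A}"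
  shows "set (rows (submatrix A I UNIV)) = row A ` I"
proof -
  have "finite I" using assms finite_subset by blast
  have "set (rows (submatrix A I UNIV)) = (\<lambda>k. row A (pick I k)) ` {..<card I}"
    using submatrix_rows_carrier[OF assms] row_submatrix_rows[OF assms]
    by (auto simp: rows_def)
  also have "\<dots> = row A ` I"
    using pick_lessThan_card_image[OF \<open>finite I\<close>] by (metis image_image)
  finally show ?thesis .
qed

lemma distinct_rows_submatrix_iff:
  assumes "I \<subseteq> {..<dim_row A}"
  shows "distinct (rows (submatrix A I UNIV)) \<longleftrightarrow> inj_on (row A) I"
proof -
  have "finite I" using assms finite_subset by blast
  have "length (rows (submatrix A I UNIV)) = card I"
    using submatrix_rows_carrier[OF assms] by simp
  then have "distinct (rows (submatrix A I UNIV)) \<longleftrightarrow> card (row A ` I) = card I"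
    using card_distinct distinct_card set_rows_submatrix[OF assms] by metis
  also have "\<dots> \<longleftrightarrow> inj_on (row A) I"
    by (rule inj_on_iff_eq_card[OF \<open>finite I\<close>, symmetric])
  finally show ?thesis .
qed

definition rows_surj :: "'a::field mat \<Rightarrow> nat set \<Rightarrow> bool" where
  "rows_surj A I \<longleftrightarrow> (\<forall>c. \<exists>x\<in>carrier_vec (dim_col A). \<forall>i\<in>I. row A i \<bullet> x = c i)"

lemma (in vec_space) full_rank_iff_surj:
  assumes A: "A \<in> carrier_mat n nc"
  shows "rank A = n \<longleftrightarrow> (\<forall>y\<in>carrier_vec n. \<exists>x\<in>carrier_vec nc. A *\<^sub>v x = y)"
proof -
  have cols: "set (cols A) \<subseteq> carrier_vec n" using A cols_dim by blast
  have "rank A = n \<longleftrightarrow> span (set (cols A)) = carrier_vec n"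
  proof
    assume "span (set (cols A)) = carrier_vec n"
    then have "span_vs (set (cols A)) = V" by simp
    then show "rank A = n" unfolding rank_def using dim_is_n by simp
  next
    assume rank: "rank A = n"
    obtain S where S: "maximal S (\<lambda>T. T \<subseteq> set (cols A) \<and> lin_indpt T)"
      using maximal_exists_superset[of "set (cols A)" "\<lambda>T. T \<subseteq> set (cols A) \<and> lin_indpt T" "{}"]
      by (auto simp: lin_dep_def)
    then have S_cols: "S \<subseteq> set (cols A)" and "lin_indpt S" and "card S = n"
      using rank_card_indpt[OF A S] rank by (auto simp: maximal_def)
    then have "basis S"
      using cols dim_is_n by (intro dim_li_is_basis) (auto intro: finite_subset)
    then have "carrier_vec n \<subseteq> span (set (cols A))"
      using span_is_monotone[OF S_cols] unfolding basis_def by simp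
    then show "span (set (cols A)) = carrier_vec n"
      using span_is_subset2[OF cols] by auto
  qed
  also have "\<dots> \<longleftrightarrow> (\<forall>y\<in>carrier_vec n. \<exists>x\<in>carrier_vec nc. A *\<^sub>v x = y)"
    using col_space_eq[OF A] A unfolding col_space_def by auto
  finally show ?thesis .
qed

lemma rank_submatrix_eq_card_iff_rows_surj:
  fixes A :: "'a::field mat"
  assumes I: "I \<subseteq> {..<dim_row A}"
  shows "vec_space.rank (card I) (submatrix A I UNIV) = card I \<longleftrightarrow> rows_surj A I"
proof -
  let ?AI = "submatrix A I UNIV"
  have AI: "?AI \<in> carrier_mat (card I) (dim_col A)" by (rule submatrix_rows_carrier[OF I])
  have "finite I" using I finite_subset by blast
  have entry: "(?AI *\<^sub>v x) $ k = row A (pick I k) \<bullet> x" if "k < card I" for k x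
    using AI that row_submatrix_rows[OF I that] by simp
  have "(\<forall>y\<in>carrier_vec (card I). \<exists>x\<in>carrier_vec (dim_col A). ?AI *\<^sub>v x = y) \<longleftrightarrow> rows_surj A I"
    unfolding rows_surj_def
  proof (intro iffI allI ballI)
    fix c :: "nat \<Rightarrow> 'a"
    assume "\<forall>y\<in>carrier_vec (card I). \<exists>x\<in>carrier_vec (dim_col A). ?AI *\<^sub>v x = y"
    then obtain x where x: "x \<in> carrier_vec (dim_col A)" "?AI *\<^sub>v x = vec (card I) (\<lambda>k. c (pick I k))"
      by (meson vec_carrier)
    have "row A i \<bullet> x = c i" if "i \<in> I" for i
      using entry[of "card {a\<in>I. a < i}" x] x(2) pick_card_in_set[OF that]
        card_less_elem_less_card[OF \<open>finite I\<close> that] by simp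
    then show "\<exists>x\<in>carrier_vec (dim_col A). \<forall>i\<in>I. row A i \<bullet> x = c i" using x(1) by blast
  next
    fix y :: "'a vec"
    assume surj: "\<forall>c. \<exists>x\<in>carrier_vec (dim_col A). \<forall>i\<in>I. row A i \<bullet> x = c i"
      and y: "y \<in> carrier_vec (card I)"
    obtain x where x: "x \<in> carrier_vec (dim_col A)" "\<forall>i\<in>I. row A i \<bullet> x = y $ card {a\<in>I. a < i}"
      using surj[THEN spec, of "\<lambda>i. y $ card {a\<in>I. a < i}"] by blast
    have "?AI *\<^sub>v x = y"
    proof (rule eq_vecI)
      fix k assume "k < dim_vec y"
      then have "k < card I" using y by simp
      then show "(?AI *\<^sub>v x) $ k = y $ k"
        using entry x(2) pick_in_set card_pick by metis
    qed (use AI y in simp)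
    then show "\<exists>x\<in>carrier_vec (dim_col A). ?AI *\<^sub>v x = y" using x(1) by blast
  qed
  then show ?thesis using vec_space.full_rank_iff_surj[OF AI] by simp
qed

(* Rows are taken as a family: a repeated row makes the family dependent. *)
definition (in vec_space) lin_indpt_rows :: "'a mat \<Rightarrow> nat set \<Rightarrow> bool" where
  "lin_indpt_rows A I \<longleftrightarrow> inj_on (row A) I \<and> lin_indpt (row A ` I)"

lemma (in vec_space) lincomb_scalar_prod:
  assumes "S \<subseteq> carrier_vec n" and "x \<in> carrier_vec n"
  shows "lincomb a S \<bullet> x = (\<Sum>w\<in>S. a w * (w \<bullet> x))"
  using assms unfolding lincomb_def
  by (subst finsum_scalar_prod_sum) (auto intro!: sum.cong)

lemma (in vec_space) lin_indpt_rows_if_rows_surj: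
  assumes A: "dim_col A = n" and surj: "rows_surj A I"
  shows "lin_indpt_rows A I"
proof -
  have dual: "\<exists>x\<in>carrier_vec n. \<forall>i'\<in>I. row A i' \<bullet> x = (if i' = i then 1 else 0)" for i
    using surj[unfolded rows_surj_def, THEN spec, of "\<lambda>i'. if i' = i then 1 else 0"] A by simp
  have "inj_on (row A) I"
  proof (rule inj_onI)
    fix i i' assume i: "i \<in> I" "i' \<in> I" and same_row: "row A i = row A i'"
    obtain x where x: "\<forall>i''\<in>I. row A i'' \<bullet> x = (if i'' = i then 1 else 0)"
      using dual by blast
    show "i = i'"
    proof (rule ccontr)
      assume "i \<noteq> i'"
      then have "row A i' \<bullet> x = 0" using bspec[OF x i(2)] by simp
      moreover have "row A i \<bullet> x = 1" using bspec[OF x i(1)] by simp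
      ultimately show False using same_row by simp
    qed
  qed
  moreover have "lin_indpt (row A ` I)"
  proof
    assume "lin_dep (row A ` I)"
    then obtain S a v where S: "finite S" "S \<subseteq> row A ` I" and lc: "lincomb a S = 0\<^sub>v n"
      and v: "v \<in> S" "a v \<noteq> 0"
      unfolding lin_dep_def by auto
    then obtain i where i: "i \<in> I" "v = row A i" by auto
    obtain x where x: "x \<in> carrier_vec n" "\<forall>i'\<in>I. row A i' \<bullet> x = (if i' = i then 1 else 0)"
      using dual by blast
    have S_carrier: "S \<subseteq> carrier_vec n" using S(2) A by auto
    have "0 = lincomb a S \<bullet> x" using lc x(1) by simp
    also have "\<dots> = (\<Sum>w\<in>S. a w * (w \<bullet> x))" by (rule lincomb_scalar_prod[OF S_carrier x(1)])
    also have "\<dots> = a v * (v \<bullet> x)"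
    proof (rule sum.remove[OF S(1) v(1), THEN trans])
      have "w \<bullet> x = 0" if "w \<in> S - {v}" for w
        using that S(2) x(2) i by auto
      then show "a v * (v \<bullet> x) + (\<Sum>w\<in>S - {v}. a w * (w \<bullet> x)) = a v * (v \<bullet> x)" by simp
    qed
    also have "\<dots> = a v" using x(2) i by simp
    finally show False using v(2) by simp
  qed
  ultimately show ?thesis unfolding lin_indpt_rows_def ..
qed

lemma (in vec_space) lin_indpt_rows_extend:
  assumes A: "dim_col A = n" and span_rows: "span (set (rows A)) = carrier_vec n"
    and N: "N \<subseteq> {..<dim_row A}" "lin_indpt_rows A N"
  obtains J where "N \<subseteq> J" "J \<subseteq> {..<dim_row A}" "card J = n" "lin_indpt_rows A J"
proof -
  let ?P = "\<lambda>J. J \<subseteq> {..<dim_row A} \<and> lin_indpt_rows A J"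
  obtain J where "finite J" "maximal J ?P" "N \<subseteq> J"
    using maximal_exists_superset[of "{..<dim_row A}" ?P N] N by blast
  then have J: "J \<subseteq> {..<dim_row A}" "inj_on (row A) J" "lin_indpt (row A ` J)"
    and max: "\<And>J'. J \<subseteq> J' \<Longrightarrow> ?P J' \<Longrightarrow> J' = J"
    by (auto simp: maximal_def lin_indpt_rows_def)
  have RJ: "row A ` J \<subseteq> carrier_vec n" using A by auto
  have "set (rows A) \<subseteq> span (row A ` J)"
  proof
    fix w assume "w \<in> set (rows A)"
    then obtain i where i: "i < dim_row A" "w = row A i" by (auto simp: rows_def)
    show "w \<in> span (row A ` J)"
    proof (rule ccontr)
      assume w_out: "w \<notin> span (row A ` J)"
      then have w_new: "w \<notin> row A ` J" using in_own_span[OF RJ] by auto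
      have "lin_indpt (row A ` J \<union> {w})"
        using lin_dep_iff_in_span[OF RJ J(3) _ w_new] w_out i A row_carrier[of A i] by simp
      then have "?P (insert i J)"
        using J w_new i by (auto simp: lin_indpt_rows_def)
      moreover have "i \<notin> J" using w_new i by blast
      ultimately show False using max[of "insert i J"] by blast
    qed
  qed
  then have "span (set (rows A)) \<subseteq> span (row A ` J)" by (rule span_subsetI[OF RJ])
  then have "span (row A ` J) = carrier_vec n" using span_is_subset2[OF RJ] span_rows by auto
  then have "card (row A ` J) \<ge> n"
    using gen_ge_dim[of "row A ` J"] \<open>finite J\<close> RJ dim_is_n by simp
  moreover have "card (row A ` J) \<le> n"
    using li_le_dim(2)[OF fin_dim RJ J(3)] dim_is_n by simp
  ultimately have "card J = n" using card_image[OF J(2)] by simp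
  with \<open>N \<subseteq> J\<close> J show ?thesis
    by (intro that[of J]) (simp_all add: lin_indpt_rows_def)
qed

lemma (in vec_space) det_submatrix_nonzero_if_lin_indpt_rows:
  assumes J: "J \<subseteq> {..<dim_row A}" "card J = n" and A: "dim_col A = n"
    and indpt: "lin_indpt_rows A J"
  shows "det (submatrix A J UNIV) \<noteq> 0"
proof -
  let ?AJ = "submatrix A J UNIV"
  have AJ: "?AJ \<in> carrier_mat n n" using submatrix_rows_carrier[OF J(1)] J(2) A by simp
  have "distinct (cols ?AJ\<^sup>T)" "lin_indpt (set (cols ?AJ\<^sup>T))"
    using indpt distinct_rows_submatrix_iff[OF J(1)] set_rows_submatrix[OF J(1)]
    by (auto simp: lin_indpt_rows_def)
  then have "rank ?AJ\<^sup>T = n" using lin_indpt_full_rank[of "?AJ\<^sup>T" n] AJ by auto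
  then have "det ?AJ\<^sup>T \<noteq> 0" using det_rank_iff[of "?AJ\<^sup>T"] AJ by auto
  then show ?thesis unfolding det_transpose[OF AJ] .
qed

lemma (in vec_space) full_row_rank_submatrix_iff_nonsingular_superset:
  fixes A :: "'a mat"
  assumes A: "dim_col A = n" and unit_rows: "set (unit_vecs n) \<subseteq> set (rows A)"
    and N: "N \<subseteq> {..<dim_row A}"
  shows "vec_space.rank (card N) (submatrix A N UNIV) = card N \<longleftrightarrow>
    (\<exists>J. N \<subseteq> J \<and> J \<subseteq> {..<dim_row A} \<and> card J = n \<and> det (submatrix A J UNIV) \<noteq> 0)"
    (is "?full_rank \<longleftrightarrow> ?nonsingular_superset")
proof
  assume ?full_rank
  then have "rows_surj A N" using rank_submatrix_eq_card_iff_rows_surj[OF N] by simp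
  then have "lin_indpt_rows A N" by (rule lin_indpt_rows_if_rows_surj[OF A])
  moreover have "span (set (rows A)) = carrier_vec n"
  proof
    have rows: "set (rows A) \<subseteq> carrier_vec n" using rows_carrier[of A] A by simp
    then show "span (set (rows A)) \<subseteq> carrier_vec n" by (rule span_is_subset2)
    have "set (unit_vecs n) \<subseteq> span (set (rows A))" using unit_rows in_own_span[OF rows] by blast
    then show "carrier_vec n \<subseteq> span (set (rows A))"
      using span_subsetI[OF rows] span_unit_vecs_is_carrier by metis
  qed
  ultimately obtain J where J: "N \<subseteq> J" "J \<subseteq> {..<dim_row A}" "card J = n" "lin_indpt_rows A J"
    using lin_indpt_rows_extend[OF A _ N] by blast
  then have "det (submatrix A J UNIV) \<noteq> 0"
    using det_submatrix_nonzero_if_lin_indpt_rows[OF J(2,3) A J(4)] by blast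
  with J show ?nonsingular_superset by blast
next
  assume ?nonsingular_superset
  then obtain J where J: "N \<subseteq> J" "J \<subseteq> {..<dim_row A}" "card J = n"
    and "det (submatrix A J UNIV) \<noteq> 0"
    by blast
  have "submatrix A J UNIV \<in> carrier_mat n n"
    using submatrix_rows_carrier[OF J(2)] J(3) A by simp
  then have "rank (submatrix A J UNIV) = n" using det_rank_iff \<open>det (submatrix A J UNIV) \<noteq> 0\<close> by blast
  then have "rows_surj A J" using rank_submatrix_eq_card_iff_rows_surj[OF J(2)] J(3) by simp
  then have "rows_surj A N" using J(1) unfolding rows_surj_def by blast
  then show ?full_rank using rank_submatrix_eq_card_iff_rows_surj[OF N] by simp
qed

lemma tildeA_carrier: "tildeA m n p A \<in> carrier_mat (m + n + p) n"
  by (simp add: tildeA_def)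

lemma unit_vecs_subset_rows_tildeA: "set (unit_vecs n :: real vec list) \<subseteq> set (rows (tildeA m n p A))"
proof
  fix e :: "real vec" assume "e \<in> set (unit_vecs n)"
  then obtain j where "j < n" "e = unit_vec n j" by (auto simp: unit_vecs_def)
  then have "e = row (tildeA m n p A) (m + j)"
    by (intro eq_vecI) (auto simp: tildeA_def unit_vec_def)
  moreover have "m + j < dim_row (tildeA m n p A)"
    using \<open>j < n\<close> tildeA_carrier[of m n p A] by simp
  ultimately show "e \<in> set (rows (tildeA m n p A))" by (auto simp: rows_def)
qed

lemma cglp_regular_iff_Nset_subset:
  assumes nonneg: "\<forall>t\<in>T. \<forall>i<dim_row tA. 0 \<le> u t $ i"
  shows "cglp_regular tA T u \<longleftrightarrow>
    (\<exists>J. Nset (dim_row tA) T u \<subseteq> J \<and> J \<subseteq> {..<dim_row tA} \<and> card J = dim_col tA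
       \<and> det (submatrix tA J UNIV) \<noteq> 0)"
proof -
  have support:
    "(\<forall>t\<in>T. \<forall>j<dim_row tA. j \<notin> J \<longrightarrow> u t $ j = 0) \<longleftrightarrow> Nset (dim_row tA) T u \<subseteq> J" for J
  proof
    assume "\<forall>t\<in>T. \<forall>j<dim_row tA. j \<notin> J \<longrightarrow> u t $ j = 0"
    then show "Nset (dim_row tA) T u \<subseteq> J" unfolding Nset_def by force
  next
    assume N_in_J: "Nset (dim_row tA) T u \<subseteq> J"
    show "\<forall>t\<in>T. \<forall>j<dim_row tA. j \<notin> J \<longrightarrow> u t $ j = 0"
    proof (intro ballI allI impI)
      fix t j assume "t \<in> T" "j < dim_row tA" "j \<notin> J"
      then have "\<not> 0 < u t $ j" and "0 \<le> u t $ j"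
        using N_in_J nonneg unfolding Nset_def by auto
      then show "u t $ j = 0" by linarith
    qed
  qed
  show ?thesis unfolding cglp_regular_def support by blast
qed

theorem theorem3:
  fixes m n p r :: nat and A :: "real mat" and b :: "real vec"
    and T :: "'t set" and D :: "'t \<Rightarrow> real mat" and d0 :: "'t \<Rightarrow> real vec"
    and \<alpha> :: "real vec" and \<beta> :: real and u v :: "'t \<Rightarrow> real vec"
  assumes "A \<in> carrier_mat m n" and "b \<in> carrier_vec m" and "p \<le> n"
    and "\<forall>i<m. \<forall>j<n. A $$ (i, j) \<in> \<rat>" and "\<forall>i<m. b $ i \<in> \<rat>"
    and "finite T"
    and "\<forall>t\<in>T. D t \<in> carrier_mat r n \<and> d0 t \<in> carrier_vec r"
    and "\<forall>t\<in>T. (\<forall>i<r. \<forall>j<n. D t $$ (i, j) \<in> \<rat>) \<and> (\<forall>i<r. d0 t $ i \<in> \<rat>)"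
    and "cglp_feasible (tildeA m n p A) (tildeb m n p b) T r D d0 \<alpha> \<beta> u v"
    and "cglp_basic (tildeA m n p A) (tildeb m n p b) T r D d0 \<alpha> \<beta> u v"
  shows "cglp_regular (tildeA m n p A) T u \<longleftrightarrow>
         vec_space.rank (card (Nset (m + n + p) T u))
            (submatrix (tildeA m n p A) (Nset (m + n + p) T u) UNIV)
           = card (Nset (m + n + p) T u)"
proof -
  let ?tA = "tildeA m n p A" and ?N = "Nset (m + n + p) T u"
  have dims: "dim_row ?tA = m + n + p" "dim_col ?tA = n" using tildeA_carrier[of m n p A] by auto
  have "\<forall>t\<in>T. \<forall>i<dim_row ?tA. 0 \<le> u t $ i"
    using assms(9) unfolding cglp_feasible_def by blast
  then have "cglp_regular ?tA T u \<longleftrightarrow>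
      (\<exists>J. ?N \<subseteq> J \<and> J \<subseteq> {..<dim_row ?tA} \<and> card J = n \<and> det (submatrix ?tA J UNIV) \<noteq> 0)"
    using cglp_regular_iff_Nset_subset[of T ?tA u] dims by simp
  also have "\<dots> \<longleftrightarrow> vec_space.rank (card ?N) (submatrix ?tA ?N UNIV) = card ?N"
    using vec_space.full_row_rank_submatrix_iff_nonsingular_superset[
        OF dims(2) unit_vecs_subset_rows_tildeA, of ?N] dims
    by (simp add: Nset_def subset_eq)
  finally show ?thesis .
qed

end
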